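(* Let $(\Gamma,M)$ be an E-GCM graph which is unital OA-cyclic, with Coxeter group $W$. Then for all $w\in W$, \[ f_1\,\ell(w)\le |N_M(w)|\le f_2\,\ell(w),\] where $f_1$ and $f_2$ are respectively the minimum and the maximum of the integers $f_{\Gamma',M'}$ as $(\Gamma',M')$ ranges over the OA-connected components of $(\Gamma,M)$.
   Context: E-GCM $M=(M_{ij})_{i,j\in I_n}$: real, $M_{ii}=2$, $M_{ij}\le0$ ($i\ne j$), $M_{ij}\ne0\iff M_{ji}\ne0$, nonzero $M_{ij}M_{ji}$ either $\ge4$ or $=4\cos^2(\pi/m)$ with $m\ge3$ integer; nodes $\gamma_i$, adjacent iff $M_{ij}\ne 0$. Coxeter group $W$: generators $s_i$, $s_i^2=e$, $(s_is_j)^{m_{ij}}=e$, with $m_{ij}=k$ if $M_{ij}M_{ji}=4\cos^2(\pi/k)$ ($k\ge2$), $m_{ij}=\infty$ if $M_{ij}M_{ji}\ge4$; $\ell$ = length. $W$ acts on real $V$ with basis $(\alpha_i)$ via $s_i.\alpha_j=\alpha_j-M_{ij}\alpha_i$; $\Phi_M=\{w.\alpha_i\}$; $\Phi_M^+$ ($\Phi_M^-$) = roots with all coefficients $\ge 0$ ($\le0$). $N_M(w):=\{\alpha\in\Phi_M^+: w.\alpha\in\Phi_M^-\}$. Odd-adjacent: $m_{ij}$ odd; then $K_{ji}:=-M_{ji}/(2\cos(\pi/m_{ij}))$. OA-path: sequence of nodes $[\gamma_{i_0},\dots,\gamma_{i_p}]$ with consecutive ones odd-adjacent, $\Pi_{\mathcal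 P}=K_{i_pi_{p-1}}\cdots K_{i_1i_0}$; OA-cycle: $\gamma_{i_p}=\gamma_{i_0}$. $(\Gamma,M)$ is unital OA-cyclic if $\Pi_{\mathcal C}=1$ for every OA-cycle. OA-connected component: induced E-GCM subgraph on a maximal set of nodes pairwise joinable by OA-paths. For an OA-connected component $(\Gamma',M')$ (unital OA-cyclic here), $f_{\Gamma',M'}:=|\{K\alpha_x:K\in\mathbb{R}\}\cap\Phi_M^+|$ for any node $\gamma_x$ of $(\Gamma',M')$; this number is finite and independent of the choice of $x$. *)

theory Defs
  imports Complex_Main "HOL-Library.Extended_Nat"
begin

text \<open>Nodes / indices are the naturals 0..<n. An E-GCM is a function M :: nat => nat => real,
  only its values on {0..<n} x {0..<n} matter.\<close>

definition egcm :: "nat \<Rightarrow> (nat \<Rightarrow> nat \<Rightarrow> real) \<Rightarrow> bool" where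
  "egcm n M \<longleftrightarrow>
     (\<forall>i<n. M i i = 2) \<and>
     (\<forall>i<n. \<forall>j<n. i \<noteq> j \<longrightarrow>
        M i j \<le> 0 \<and> (M i j \<noteq> 0 \<longleftrightarrow> M j i \<noteq> 0) \<and>
        (M i j * M j i \<noteq> 0 \<longrightarrow>
           M i j * M j i \<ge> 4 \<or> (\<exists>m::nat. m \<ge> 3 \<and> M i j * M j i = 4 * (cos (pi / real m))\<^sup>2)))"

definition cox_m :: "(nat \<Rightarrow> nat \<Rightarrow> real) \<Rightarrow> nat \<Rightarrow> nat \<Rightarrow> enat" where
  "cox_m M i j =
     (if i = j then 1
      else if M i j * M j i \<ge> 4 then \<infinity>
      else enat (THE k::nat. k \<ge> 2 \<and> M i j * M j i = 4 * (cos (pi / real k))\<^sup>2))"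

text \<open>Coxeter group W as words over the generators s_0..s_(n-1) modulo the congruence
  generated by the defining relations s_i^2 = e and (s_i s_j)^(m_ij) = e.\<close>
inductive cox_eq :: "nat \<Rightarrow> (nat \<Rightarrow> nat \<Rightarrow> real) \<Rightarrow> nat list \<Rightarrow> nat list \<Rightarrow> bool"
  for n M where
  refl: "cox_eq n M u u"
| sym: "cox_eq n M u v \<Longrightarrow> cox_eq n M v u"
| trans: "cox_eq n M u v \<Longrightarrow> cox_eq n M v w \<Longrightarrow> cox_eq n M u w"
| square: "i < n \<Longrightarrow> cox_eq n M (u @ [i, i] @ v) (u @ v)"
| braid: "i < n \<Longrightarrow> j < n \<Longrightarrow> i \<noteq> j \<Longrightarrow> cox_m M i j = enat k \<Longrightarrow>
            cox_eq n M (u @ concat (replicate k [i, j]) @ v) (u @ v)"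

definition words :: "nat \<Rightarrow> nat list set" where
  "words n = {ws. set ws \<subseteq> {..<n}}"

definition cox_length :: "nat \<Rightarrow> (nat \<Rightarrow> nat \<Rightarrow> real) \<Rightarrow> nat list \<Rightarrow> nat" where
  "cox_length n M ws = (LEAST k. \<exists>vs \<in> words n. length vs = k \<and> cox_eq n M ws vs)"

text \<open>Vectors of V are coefficient functions w.r.t. the basis alpha_0..alpha_(n-1).\<close>
definition simple_root :: "nat \<Rightarrow> nat \<Rightarrow> real" where
  "simple_root i = (\<lambda>k. if k = i then 1 else 0)"

text \<open>s_i.v = v - (sum_j v_j M_ij) alpha_i, so that s_i.alpha_j = alpha_j - M_ij alpha_i.\<close>
definition refl_act :: "nat \<Rightarrow> (nat \<Rightarrow> nat \<Rightarrow> real) \<Rightarrow> nat \<Rightarrow> (nat \<Rightarrow> real) \<Rightarrow> (nat \<Rightarrow> real)" where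
  "refl_act n M i v = (\<lambda>k. v k - (if k = i then (\<Sum>j<n. M i j * v j) else 0))"

text \<open>Action of the word s_(i1) ... s_(ik): first s_(ik), last s_(i1).\<close>
definition word_act :: "nat \<Rightarrow> (nat \<Rightarrow> nat \<Rightarrow> real) \<Rightarrow> nat list \<Rightarrow> (nat \<Rightarrow> real) \<Rightarrow> (nat \<Rightarrow> real)" where
  "word_act n M ws v = foldr (refl_act n M) ws v"

definition roots :: "nat \<Rightarrow> (nat \<Rightarrow> nat \<Rightarrow> real) \<Rightarrow> (nat \<Rightarrow> real) set" where
  "roots n M = {word_act n M ws (simple_root i) | ws i. ws \<in> words n \<and> i < n}"

definition pos_roots :: "nat \<Rightarrow> (nat \<Rightarrow> nat \<Rightarrow> real) \<Rightarrow> (nat \<Rightarrow> real) set" where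
  "pos_roots n M = {a \<in> roots n M. \<forall>k<n. a k \<ge> 0}"

definition neg_roots :: "nat \<Rightarrow> (nat \<Rightarrow> nat \<Rightarrow> real) \<Rightarrow> (nat \<Rightarrow> real) set" where
  "neg_roots n M = {a \<in> roots n M. \<forall>k<n. a k \<le> 0}"

definition inv_set :: "nat \<Rightarrow> (nat \<Rightarrow> nat \<Rightarrow> real) \<Rightarrow> nat list \<Rightarrow> (nat \<Rightarrow> real) set" where
  "inv_set n M ws = {a \<in> pos_roots n M. word_act n M ws a \<in> neg_roots n M}"

definition odd_adj :: "nat \<Rightarrow> (nat \<Rightarrow> nat \<Rightarrow> real) \<Rightarrow> nat \<Rightarrow> nat \<Rightarrow> bool" where
  "odd_adj n M i j \<longleftrightarrow> i < n \<and> j < n \<and> i \<noteq> j \<and> (\<exists>k. cox_m M i j = enat k \<and> odd k)"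

definition K_coef :: "(nat \<Rightarrow> nat \<Rightarrow> real) \<Rightarrow> nat \<Rightarrow> nat \<Rightarrow> real" where
  "K_coef M j i = - M j i / (2 * cos (pi / real (the_enat (cox_m M i j))))"

definition oa_path :: "nat \<Rightarrow> (nat \<Rightarrow> nat \<Rightarrow> real) \<Rightarrow> nat list \<Rightarrow> bool" where
  "oa_path n M p \<longleftrightarrow> p \<noteq> [] \<and> (\<forall>t. Suc t < length p \<longrightarrow> odd_adj n M (p ! t) (p ! Suc t))"

definition path_prod :: "(nat \<Rightarrow> nat \<Rightarrow> real) \<Rightarrow> nat list \<Rightarrow> real" where
  "path_prod M p = (\<Prod>t<length p - 1. K_coef M (p ! Suc t) (p ! t))"

definition oa_cycle :: "nat \<Rightarrow> (nat \<Rightarrow> nat \<Rightarrow> real) \<Rightarrow> nat list \<Rightarrow> bool" where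
  "oa_cycle n M p \<longleftrightarrow> oa_path n M p \<and> last p = hd p"

definition unital_oa_cyclic :: "nat \<Rightarrow> (nat \<Rightarrow> nat \<Rightarrow> real) \<Rightarrow> bool" where
  "unital_oa_cyclic n M \<longleftrightarrow> (\<forall>p. oa_cycle n M p \<longrightarrow> path_prod M p = 1)"

definition oa_joined :: "nat \<Rightarrow> (nat \<Rightarrow> nat \<Rightarrow> real) \<Rightarrow> nat \<Rightarrow> nat \<Rightarrow> bool" where
  "oa_joined n M x y \<longleftrightarrow> (\<exists>p. oa_path n M p \<and> hd p = x \<and> last p = y)"

definition oa_components :: "nat \<Rightarrow> (nat \<Rightarrow> nat \<Rightarrow> real) \<Rightarrow> nat set set" where
  "oa_components n M = {{y. y < n \<and> oa_joined n M x y} | x. x < n}"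

definition f_node :: "nat \<Rightarrow> (nat \<Rightarrow> nat \<Rightarrow> real) \<Rightarrow> nat \<Rightarrow> nat" where
  "f_node n M x = card {a \<in> pos_roots n M. \<exists>K::real. a = (\<lambda>k. K * simple_root x k)}"

definition f_comp :: "nat \<Rightarrow> (nat \<Rightarrow> nat \<Rightarrow> real) \<Rightarrow> nat set \<Rightarrow> nat" where
  "f_comp n M C = f_node n M (SOME x. x \<in> C)"

end

theory Submission
  imports Defs
begin

(* If l(w s_i) > l(w) then w.alpha_i is a nonnegative combination of simple roots: as in
   Humphreys' proof for Coxeter groups, this reduces by induction on l(w) to the dihedral
   subgroup generated by s_i, s_j, where w.alpha_i is computed explicitly through Chebyshev
   polynomials. Consequently every root is positive or negative, and for a reduced word
   w = v s_i the inversion set splits as N(w) = P_i + s_i N(v) (disjoint union), where P_i is the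
   set of positive roots that are multiples of alpha_i. Hence |N(w)| is the sum of the numbers
   |P_i| over the letters of a reduced word for w. If m_ij is odd, the alternating word of length
   m_ij - 1 maps alpha_i to a positive multiple of alpha_j, so |P_i| = |P_j|: the number f is
   constant on OA-connected components, and the bounds follow. *)

section \<open>Words and the reflection representation\<close>

lemma words_Nil [simp]: "[] \<in> words n"
  and words_Cons [simp]: "i # ws \<in> words n \<longleftrightarrow> i < n \<and> ws \<in> words n"
  and words_append [simp]: "xs @ ys \<in> words n \<longleftrightarrow> xs \<in> words n \<and> ys \<in> words n"
  by (auto simp: words_def)

lemma words_subset: "set ws \<subseteq> A \<Longrightarrow> A \<subseteq> {..<n} \<Longrightarrow> ws \<in> words n"
  by (auto simp: words_def)

lemma word_act_Nil [simp]: "word_act n M [] v = v"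
  and word_act_Cons [simp]: "word_act n M (i # ws) v = refl_act n M i (word_act n M ws v)"
  and word_act_append [simp]: "word_act n M (xs @ ys) v = word_act n M xs (word_act n M ys v)"
  by (simp_all add: word_act_def)

lemma word_act_add:
  "word_act n M ws (\<lambda>k. u k + v k) = (\<lambda>k. word_act n M ws u k + word_act n M ws v k)"
proof (induction ws)
  case (Cons i ws)
  then show ?case by (auto simp: refl_act_def sum.distrib algebra_simps)
qed simp

lemma word_act_scale:
  "word_act n M ws (\<lambda>k. c * v k) = (\<lambda>k. c * word_act n M ws v k)"
proof (induction ws)
  case (Cons i ws)
  then show ?case by (auto simp: refl_act_def sum_distrib_left algebra_simps)
qed simp

lemma word_act_zero: "word_act n M ws (\<lambda>k. 0) = (\<lambda>k. 0)"
  using word_act_scale[of n M ws 0 "\<lambda>k. 0"] by simp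

lemma word_act_vanishes_outside:
  assumes "ws \<in> words n" "\<forall>k\<ge>n. v k = 0"
  shows "\<forall>k\<ge>n. word_act n M ws v k = 0"
  using assms by (induction ws) (auto simp: refl_act_def)

lemma refl_act_fixed: "(\<Sum>l<n. M i l * v l) = 0 \<Longrightarrow> refl_act n M i v = v"
  unfolding refl_act_def by (rule ext) simp

lemma word_act_fixed:
  assumes "set ws \<subseteq> {i, j}" "(\<Sum>l<n. M i l * v l) = 0" "(\<Sum>l<n. M j l * v l) = 0"
  shows "word_act n M ws v = v"
  using assms by (induction ws) (auto simp: refl_act_fixed)

lemma refl_act_simple_root_self:
  assumes "i < n" "M i i = 2"
  shows "refl_act n M i (simple_root i) = (\<lambda>k. - simple_root i k)"
  using assms
  by (auto simp: refl_act_def simple_root_def if_distrib[of "\<lambda>x. M i _ * x"] cong: if_cong)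

lemma refl_act_involutive:
  assumes "i < n" "M i i = 2"
  shows "refl_act n M i (refl_act n M i v) = v"
proof -
  let ?f = "\<Sum>j<n. M i j * v j"
  have "(\<Sum>j<n. M i j * (v j - (if j = i then ?f else 0))) = ?f - M i i * ?f"
    using assms(1) by (simp add: right_diff_distrib sum_subtractf if_distrib[of "\<lambda>x. M i _ * x"]
        cong: if_cong)
  then show ?thesis using assms by (auto simp: refl_act_def)
qed

lemma word_act_rev_cancel:
  assumes "ws \<in> words n" "\<And>i. i < n \<Longrightarrow> M i i = 2"
  shows "word_act n M (rev ws) (word_act n M ws v) = v"
  using assms(1) by (induction ws arbitrary: v) (simp_all add: refl_act_involutive assms(2))

section \<open>The word problem and the length function\<close>

lemma cox_eq_append_cong: "cox_eq n M u v \<Longrightarrow> cox_eq n M (x @ u @ y) (x @ v @ y)"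
proof (induction rule: cox_eq.induct)
  case (square i u v)
  then show ?case using cox_eq.square[of i n M "x @ u" "v @ y"] by simp
next
  case (braid i j k u v)
  then show ?case using cox_eq.braid[of i n j M k "x @ u" "v @ y"] by simp
qed (auto intro: cox_eq.intros)

lemma cox_eq_append_right: "cox_eq n M u v \<Longrightarrow> cox_eq n M (u @ y) (v @ y)"
  using cox_eq_append_cong[of n M u v "[]" y] by simp

lemma cox_eq_append_left: "cox_eq n M u v \<Longrightarrow> cox_eq n M (x @ u) (x @ v)"
  using cox_eq_append_cong[of n M u v x "[]"] by simp

lemma cox_eq_even_length: "cox_eq n M u v \<Longrightarrow> even (length u + length v)"
  by (induction rule: cox_eq.induct) (auto simp: length_concat sum_list_replicate)

lemma cox_eq_snoc_square: "i < n \<Longrightarrow> cox_eq n M (ws @ [i, i]) ws"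
  using cox_eq.square[of i n M ws "[]"] by simp

lemma cox_eq_rev_cancel: "ws \<in> words n \<Longrightarrow> cox_eq n M (ws @ rev ws) []"
proof (induction ws)
  case (Cons i ws)
  then have "cox_eq n M ([i] @ (ws @ rev ws) @ [i]) ([i] @ [] @ [i])"
    by (intro cox_eq_append_cong) simp
  then show ?case using Cons.prems cox_eq.square[of i n M "[]" "[]"] by (auto intro: cox_eq.trans)
qed (simp add: cox_eq.refl)

lemma cox_eq_cancel_adjacent_repeat:
  assumes "\<not> distinct_adj u" "u \<in> words n"
  obtains u' where "set u' \<subseteq> set u" "length u' + 2 = length u" "cox_eq n M u u'"
proof -
  obtain k where k: "Suc k < length u" "u ! k = u ! Suc k"
    using assms(1) by (auto simp: distinct_adj_conv_nth)
  have "u = take k u @ [u ! k, u ! Suc k] @ drop (Suc (Suc k)) u"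
    using k(1) by (simp add: Cons_nth_drop_Suc)
  moreover have "u ! k \<in> set u"
    using k(1) by simp
  then have "u ! k < n"
    using assms(2) by (auto simp: words_def)
  ultimately have "cox_eq n M u (take k u @ drop (Suc (Suc k)) u)"
    using cox_eq.square[of "u ! k" n M "take k u" "drop (Suc (Suc k)) u"] k(2) by simp
  moreover have "set (take k u @ drop (Suc (Suc k)) u) \<subseteq> set u"
    using set_take_subset set_drop_subset by fastforce
  ultimately show ?thesis using k(1) by (intro that) auto
qed

lemma cox_length_witness:
  assumes "ws \<in> words n"
  obtains vs where "vs \<in> words n" "length vs = cox_length n M ws" "cox_eq n M ws vs"
proof -
  have "\<exists>vs\<in>words n. length vs = cox_length n M ws \<and> cox_eq n M ws vs"
    unfolding cox_length_def by (rule LeastI_ex) (use assms cox_eq.refl in blast)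
  then show ?thesis using that by blast
qed

lemma cox_length_le:
  "vs \<in> words n \<Longrightarrow> cox_eq n M ws vs \<Longrightarrow> cox_length n M ws \<le> length vs"
  unfolding cox_length_def by (rule Least_le) blast

lemma cox_length_le_length: "ws \<in> words n \<Longrightarrow> cox_length n M ws \<le> length ws"
  by (rule cox_length_le) (auto intro: cox_eq.refl)

lemma cox_length_cong: "cox_eq n M ws vs \<Longrightarrow> cox_length n M ws = cox_length n M vs"
proof -
  assume "cox_eq n M ws vs"
  then have "cox_eq n M ws u \<longleftrightarrow> cox_eq n M vs u" for u
    by (meson cox_eq.sym cox_eq.trans)
  then show ?thesis unfolding cox_length_def by simp
qed

lemma cox_length_even:
  assumes "ws \<in> words n"
  shows "even (cox_length n M ws + length ws)"
proof -
  obtain vs where "length vs = cox_length n M ws" "cox_eq n M ws vs"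
    using cox_length_witness[OF assms] by blast
  then show ?thesis using cox_eq_even_length[of n M ws vs] by (simp add: add.commute)
qed

lemma cox_length_append_le:
  assumes "xs \<in> words n" "ys \<in> words n"
  shows "cox_length n M (xs @ ys) \<le> cox_length n M xs + length ys"
proof -
  obtain vs where "vs \<in> words n" "length vs = cox_length n M xs" "cox_eq n M xs vs"
    using cox_length_witness[OF assms(1)] by blast
  then show ?thesis
    using cox_length_le[of "vs @ ys" n M "xs @ ys"] cox_eq_append_right assms(2) by simp
qed

lemma cox_length_snoc:
  assumes "ws \<in> words n" "i < n"
  shows "cox_length n M (ws @ [i]) = Suc (cox_length n M ws) \<or>
         Suc (cox_length n M (ws @ [i])) = cox_length n M ws"
proof -
  have parity: "b = Suc a \<or> Suc b = a"
    if "a \<le> Suc b" "b \<le> Suc a" "even (a + l)" "even (b + Suc l)" for a b l :: nat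
    using that by presburger
  have "cox_length n M ws = cox_length n M ((ws @ [i]) @ [i])"
    using cox_length_cong[OF cox_eq_snoc_square[OF assms(2)]] by simp
  then have "cox_length n M ws \<le> Suc (cox_length n M (ws @ [i]))"
    using cox_length_append_le[of "ws @ [i]" n "[i]" M] assms by simp
  moreover have "cox_length n M (ws @ [i]) \<le> Suc (cox_length n M ws)"
    using cox_length_append_le[of ws n "[i]" M] assms by simp
  moreover have "even (cox_length n M ws + length ws)"
    and "even (cox_length n M (ws @ [i]) + Suc (length ws))"
    using cox_length_even[of ws n M] cox_length_even[of "ws @ [i]" n M] assms by auto
  ultimately show ?thesis by (rule parity)
qed

lemma cox_length_snoc_witness:
  assumes "ws \<in> words n" "cox_length n M ws \<noteq> 0"
  obtains w' j where "w' \<in> words n" "j < n" "cox_eq n M ws (w' @ [j])"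
    "cox_length n M w' + 1 = cox_length n M ws"
proof -
  obtain rs where rs: "rs \<in> words n" "length rs = cox_length n M ws" "cox_eq n M ws rs"
    using cox_length_witness[OF assms(1)] .
  then obtain w' j where rs_eq: "rs = w' @ [j]"
    using assms(2) by (cases rs rule: rev_cases) auto
  then have w': "w' \<in> words n" "j < n" using rs(1) by auto
  have "cox_length n M ws \<le> cox_length n M w' + 1"
    using cox_length_cong[OF rs(3)] cox_length_append_le[of w' n "[j]" M] w' rs_eq by simp
  moreover have "cox_length n M w' \<le> length w'"
    using cox_length_le_length[OF w'(1)] .
  ultimately show ?thesis
    using that w' rs rs_eq by simp
qed

lemma right_descent_ne_ascent:
  assumes "i < n" "cox_eq n M ws (w' @ [j])" "cox_length n M w' + 1 = cox_length n M ws"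
    and "cox_length n M ws < cox_length n M (ws @ [i])"
  shows "j \<noteq> i"
proof
  assume "j = i"
  then have "cox_eq n M (ws @ [i]) w'"
    using cox_eq_append_right[OF assms(2), of "[i]"] cox_eq_snoc_square[OF assms(1), of M w']
    by (auto intro: cox_eq.trans)
  then show False using assms(3,4) cox_length_cong by fastforce
qed

lemma cox_length_tail_replace:
  assumes "v \<in> words n" "u' \<in> words n" "cox_eq n M w (v @ u)" "cox_eq n M (u @ y) u'"
  shows "cox_length n M (w @ y) \<le> cox_length n M v + length u'"
proof -
  have "cox_eq n M (w @ y) (v @ u')"
    using cox_eq_append_right[OF assms(3), of y] cox_eq_append_left[OF assms(4), of v]
    by (auto intro: cox_eq.trans)
  then show ?thesis
    using cox_length_cong cox_length_append_le[OF assms(1,2)] by metis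
qed

lemma parabolic_split:
  assumes "i < n" "j < n" "v\<^sub>0 \<in> words n" "set u\<^sub>0 \<subseteq> {i, j}" "cox_eq n M w (v\<^sub>0 @ u\<^sub>0)"
    and "cox_length n M v\<^sub>0 + length u\<^sub>0 = cox_length n M w"
  obtains v u where "v \<in> words n" "set u \<subseteq> {i, j}" "cox_eq n M w (v @ u)"
    "cox_length n M v + length u = cox_length n M w" "cox_length n M v \<le> cox_length n M v\<^sub>0"
    "cox_length n M v < cox_length n M (v @ [i])" "cox_length n M v < cox_length n M (v @ [j])"
proof -
  define Q where "Q = (\<lambda>(v, u). v \<in> words n \<and> set u \<subseteq> {i, j} \<and> cox_eq n M w (v @ u) \<and>
                                cox_length n M v + length u = cox_length n M w)"
  have "Q (v\<^sub>0, u\<^sub>0)" using assms unfolding Q_def by simp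
  then obtain v u where Q: "Q (v, u)" and v_le: "cox_length n M v \<le> cox_length n M v\<^sub>0"
    and minimal: "\<And>v' u'. Q (v', u') \<Longrightarrow> cox_length n M v \<le> cox_length n M v'"
    using ex_has_least_nat[of Q "(v\<^sub>0, u\<^sub>0)" "\<lambda>p. cox_length n M (fst p)"] by fastforce
  have ascent: "cox_length n M v < cox_length n M (v @ [t])" if t: "t \<in> {i, j}" for t
  proof (rule ccontr)
    assume no_ascent: "\<not> ?thesis"
    have tn: "t < n" using t assms(1,2) by auto
    then have descent: "Suc (cox_length n M (v @ [t])) = cox_length n M v"
      using cox_length_snoc[of v n t M] Q no_ascent by (auto simp: Q_def)
    have "cox_eq n M (v @ [t, t] @ u) (v @ u)" by (rule cox_eq.square[OF tn])
    then have "cox_eq n M w ((v @ [t]) @ t # u)"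
      using Q unfolding Q_def by (auto intro: cox_eq.sym cox_eq.trans)
    then have "Q (v @ [t], t # u)" using Q t tn descent unfolding Q_def by auto
    from minimal[OF this] descent show False by simp
  qed
  show ?thesis using that Q v_le ascent unfolding Q_def by auto
qed

section \<open>Rank two\<close>

lemma cox_m_sym: "cox_m M i j = cox_m M j i"
  by (simp add: cox_m_def mult.commute)

lemma cox_m_infinity: "i \<noteq> j \<Longrightarrow> cox_m M i j = \<infinity> \<Longrightarrow> 4 \<le> M i j * M j i"
  by (auto simp: cox_m_def split: if_splits)

lemma pi_div_le_pi_half: "2 \<le> k \<Longrightarrow> pi / real k \<le> pi / 2"
  by (rule divide_left_mono) auto

lemma cos_pi_div_nonneg:
  assumes "2 \<le> k"
  shows "0 \<le> cos (pi / real k)"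
proof -
  have "0 \<le> pi / real k" by simp
  then show ?thesis using pi_div_le_pi_half[OF assms] by (intro cos_ge_zero) linarith+
qed

lemma sin_pi_div_pos:
  assumes "2 \<le> k"
  shows "0 < sin (pi / real k)"
proof -
  have "0 < pi / real k" using assms by simp
  then show ?thesis using pi_div_le_pi_half[OF assms] pi_gt_zero by (intro sin_gt_zero) linarith+
qed

lemma cos_sq_pi_div_inj:
  assumes "2 \<le> k" "2 \<le> k'" "(cos (pi / real k))\<^sup>2 = (cos (pi / real k'))\<^sup>2"
  shows "k = k'"
proof -
  have "cos (pi / real k) = cos (pi / real k')"
    using assms cos_pi_div_nonneg by simp
  moreover have "pi / real k \<le> pi" "pi / real k' \<le> pi"
    using pi_div_le_pi_half[of k] pi_div_le_pi_half[of k'] assms pi_gt_zero by linarith+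
  ultimately have "pi / real k = pi / real k'"
    using cos_inj_pi[of "pi / real k" "pi / real k'"] by simp
  then show ?thesis using assms by (simp add: field_simps)
qed

text \<open>\<open>cheb c k\<close> is the Chebyshev polynomial \<open>U\<^sub>k\<^sub>-\<^sub>1(c/2)\<close> of the second kind.\<close>

fun cheb :: "real \<Rightarrow> nat \<Rightarrow> real" where
  "cheb c 0 = 0"
| "cheb c (Suc 0) = 1"
| "cheb c (Suc (Suc k)) = c * cheb c (Suc k) - cheb c k"

lemma cheb_cos:
  assumes "sin t \<noteq> 0"
  shows "cheb (2 * cos t) k = sin (real k * t) / sin t"
proof (induction "2 * cos t" k rule: cheb.induct)
  case (3 k)
  have "sin (real (Suc (Suc k)) * t) = 2 * cos t * sin (real (Suc k) * t) - sin (real k * t)"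
  proof -
    have "real (Suc (Suc k)) * t = real (Suc k) * t + t" "real k * t = real (Suc k) * t - t"
      by (simp_all add: algebra_simps)
    then show ?thesis by (simp only: sin_add sin_diff) (simp add: algebra_simps)
  qed
  then show ?case using 3 assms by (simp add: field_simps)
qed (use assms in simp_all)

lemma cheb_nonneg_if_two_le:
  assumes "2 \<le> c"
  shows "0 \<le> cheb c k"
proof -
  have "0 \<le> cheb c k \<and> cheb c k \<le> cheb c (Suc k)"
  proof (induction k)
    case (Suc k)
    have "2 * cheb c (Suc k) \<le> c * cheb c (Suc k)"
      using assms Suc by (intro mult_right_mono) auto
    then show ?case using Suc by auto
  qed simp
  then show ?thesis ..
qed

context
  fixes m :: nat
  assumes m: "2 \<le> m"
begin

lemma cheb_cos_pi_div:
  "cheb (2 * cos (pi / real m)) k = sin (real k * pi / real m) / sin (pi / real m)"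
  using cheb_cos[of "pi / real m" k] sin_pi_div_pos[OF m] by simp

lemma cheb_cos_pi_div_nonneg: "k \<le> m \<Longrightarrow> 0 \<le> cheb (2 * cos (pi / real m)) k"
  using m sin_pi_div_pos[OF m]
  by (auto simp: cheb_cos_pi_div field_simps intro!: divide_nonneg_pos sin_ge_zero)

lemma cheb_cos_pi_div_m: "cheb (2 * cos (pi / real m)) m = 0"
  using m by (simp add: cheb_cos_pi_div)

lemma cheb_cos_pi_div_m_minus_1: "cheb (2 * cos (pi / real m)) (m - 1) = 1"
proof -
  have "real (m - 1) * pi / real m = pi - pi / real m"
    using m by (simp add: field_simps)
  then show ?thesis using sin_pi_div_pos[OF m] by (simp add: cheb_cos_pi_div)
qed

lemma cheb_cos_pi_div_2m: "cheb (2 * cos (pi / real m)) (2 * m) = 0"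
proof -
  have "real (2 * m) * pi / real m = 2 * pi"
    using m by (simp add: field_simps)
  then show ?thesis by (simp add: cheb_cos_pi_div)
qed

lemma cheb_cos_pi_div_2m_plus_1: "cheb (2 * cos (pi / real m)) (2 * m + 1) = 1"
proof -
  have "real (2 * m + 1) * pi / real m = pi / real m + 2 * pi"
    using m by (simp add: field_simps)
  then show ?thesis using sin_pi_div_pos[OF m] by (simp add: cheb_cos_pi_div sin_add)
qed

end

lemma cheb_pair_step:
  fixes a b c d :: real
  assumes "c * d = - b" "- a * d = c"
  shows "- cheb c (2 * k + 1) - a * (d * cheb c (2 * k + 2)) = cheb c (2 * Suc k + 1)"
    and "- (d * cheb c (2 * Suc k)) - b * cheb c (2 * Suc k + 1) =
           d * cheb c (2 * Suc k + 2)"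
proof -
  have "- cheb c (2 * k + 1) - a * (d * cheb c (2 * k + 2)) =
          (- a * d) * cheb c (2 * k + 2) - cheb c (2 * k + 1)"
    by (simp add: algebra_simps)
  also have "\<dots> = cheb c (2 * Suc k + 1)"
    unfolding assms(2) by (simp add: numeral_eq_Suc)
  finally show "- cheb c (2 * k + 1) - a * (d * cheb c (2 * k + 2)) = cheb c (2 * Suc k + 1)" .
  have "- (d * cheb c (2 * Suc k)) - b * cheb c (2 * Suc k + 1) =
          d * (c * cheb c (2 * Suc k + 1) - cheb c (2 * Suc k))"
    using assms(1) by (simp add: algebra_simps mult.assoc[symmetric] del: cheb.simps)
  also have "\<dots> = d * cheb c (2 * Suc k + 2)"
    by (simp add: numeral_eq_Suc)
  finally show "- (d * cheb c (2 * Suc k)) - b * cheb c (2 * Suc k + 1) =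
                  d * cheb c (2 * Suc k + 2)" .
qed

definition pair_vec :: "nat \<Rightarrow> nat \<Rightarrow> real \<Rightarrow> real \<Rightarrow> nat \<Rightarrow> real" where
  "pair_vec i j x y = (\<lambda>k. x * simple_root i k + y * simple_root j k)"

lemma pair_vec_swap: "pair_vec i j x y = pair_vec j i y x"
  by (auto simp: pair_vec_def)

lemma simple_root_eq_pair_vec: "simple_root i = pair_vec i j 1 0"
  by (auto simp: pair_vec_def)

lemma sum_pair_vec:
  assumes "i < n" "j < n" "i \<noteq> j"
  shows "(\<Sum>l<n. N l * pair_vec i j x y l) = N i * x + N j * y"
proof -
  have "(\<Sum>l<n. N l * pair_vec i j x y l) =
          (\<Sum>l<n. if l = i then N i * x else 0) + (\<Sum>l<n. if l = j then N j * y else 0)"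
    unfolding pair_vec_def simple_root_def sum.distrib[symmetric] using assms
    by (intro sum.cong) auto
  then show ?thesis using assms by simp
qed

lemma word_act_pair_vec:
  "word_act n M ws (pair_vec i j x y) =
     (\<lambda>k. x * word_act n M ws (simple_root i) k + y * word_act n M ws (simple_root j) k)"
  unfolding pair_vec_def by (simp add: word_act_add word_act_scale)

lemma refl_act_pair_vec_fst:
  assumes "i < n" "j < n" "i \<noteq> j" "M i i = 2"
  shows "refl_act n M i (pair_vec i j x y) = pair_vec i j (- x - M i j * y) y"
  using assms sum_pair_vec[OF assms(1-3), of "M i"]
  by (auto simp: refl_act_def pair_vec_def simple_root_def algebra_simps)

lemma refl_act_pair_vec_snd:
  assumes "i < n" "j < n" "i \<noteq> j" "M j j = 2"
  shows "refl_act n M j (pair_vec i j x y) = pair_vec i j x (- y - M j i * x)"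
  using refl_act_pair_vec_fst[of j n i M y x] assms by (simp add: pair_vec_swap)

text \<open>\<open>alt_word i j r\<close> is the alternating word \<open>\<dots> s\<^sub>i s\<^sub>j\<close> with \<open>r\<close> letters; its last letter is
  \<open>j\<close>, so \<open>s\<^sub>j\<close> acts first.\<close>

definition alt_word :: "nat \<Rightarrow> nat \<Rightarrow> nat \<Rightarrow> nat list" where
  "alt_word i j r = map (\<lambda>k. if even (r - k) then i else j) [0..<r]"

lemma alt_word_0 [simp]: "alt_word i j 0 = []"
  by (simp add: alt_word_def)

lemma alt_word_Suc: "alt_word i j (Suc r) = (if even (Suc r) then i else j) # alt_word i j r"
  unfolding alt_word_def by (simp add: upt_conv_Cons map_Suc_upt[symmetric] del: upt_Suc)

lemma length_alt_word [simp]: "length (alt_word i j r) = r"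
  by (simp add: alt_word_def)

lemma nth_alt_word: "k < r \<Longrightarrow> alt_word i j r ! k = (if even (r - k) then i else j)"
  by (simp add: alt_word_def)

lemma alt_word_Suc_snoc: "alt_word i j (Suc r) = alt_word j i r @ [j]"
  by (rule nth_equalityI) (auto simp: nth_append nth_alt_word less_Suc_eq Suc_diff_le)

lemma hd_alt_word: "0 < r \<Longrightarrow> hd (alt_word i j r) = (if even r then i else j)"
  by (cases r) (simp_all add: alt_word_Suc)

lemma set_alt_word: "set (alt_word i j r) \<subseteq> {i, j}"
  by (auto simp: alt_word_def)

lemma drop_alt_word: "drop k (alt_word i j r) = alt_word i j (r - k)"
  by (rule nth_equalityI) (auto simp: nth_alt_word add.commute diff_diff_add)

lemma rev_alt_word_even: "rev (alt_word i j (2 * m)) = alt_word j i (2 * m)"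
  by (rule nth_equalityI) (auto simp: rev_nth nth_alt_word)

lemma concat_replicate_eq_alt_word: "concat (replicate m [i, j]) = alt_word i j (2 * m)"
proof (induction m)
  case (Suc m)
  have "alt_word i j (2 * Suc m) = [i, j] @ alt_word i j (2 * m)"
    by (simp add: alt_word_Suc)
  then show ?case using Suc by simp
qed simp

lemma distinct_adj_eq_alt_word:
  assumes "distinct_adj u" "set u \<subseteq> {i, j}" "u \<noteq> []" "last u = j"
  shows "u = alt_word i j (length u)"
  using assms
proof (induction u)
  case (Cons x u)
  show ?case
  proof (cases "u = []")
    case True
    then show ?thesis using Cons.prems by (simp add: alt_word_Suc)
  next
    case False
    then have u: "u = alt_word i j (length u)"
      using Cons by (simp add: distinct_adj_Cons)
    moreover have "x \<noteq> hd u" "x \<in> {i, j}"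
      using Cons.prems False by (auto simp: distinct_adj_Cons)
    ultimately show ?thesis
      using False hd_alt_word[of "length u" i j] by (auto simp: alt_word_Suc)
  qed
qed simp

lemma dihedral_reduced_eq_alt_word:
  assumes ij: "i < n" "j < n" and u: "set u \<subseteq> {i, j}"
    and reduced: "\<And>u'. set u' \<subseteq> {i, j} \<Longrightarrow> cox_eq n M u u' \<Longrightarrow> length u \<le> length u'"
    and ascent: "\<And>u'. set u' \<subseteq> {i, j} \<Longrightarrow> cox_eq n M (u @ [i]) u' \<Longrightarrow> length u < length u'"
  shows "u = alt_word i j (length u)"
proof (cases "u = []")
  case False
  have "distinct_adj u"
  proof (rule ccontr)
    assume "\<not> distinct_adj u"
    moreover have "u \<in> words n" using u ij by (auto intro: words_subset)
    ultimately obtain u' where "set u' \<subseteq> set u" "length u' + 2 = length u" "cox_eq n M u u'"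
      by (rule cox_eq_cancel_adjacent_repeat)
    then show False using reduced[of u'] u by auto
  qed
  moreover have "last u = j"
  proof (rule ccontr)
    assume "last u \<noteq> j"
    then have "last u = i"
      using last_in_set[OF False] u by auto
    then have "u @ [i] = butlast u @ [i, i]"
      using append_butlast_last_id[OF False] by (metis append.assoc append_Cons append_Nil)
    then have "cox_eq n M (u @ [i]) (butlast u)"
      by (simp only: cox_eq_snoc_square[OF ij(1)])
    moreover have "set (butlast u) \<subseteq> {i, j}"
      using u by (meson in_set_butlastD subset_iff)
    ultimately show False using ascent[of "butlast u"] False by simp
  qed
  ultimately show ?thesis using distinct_adj_eq_alt_word u False by blast
qed simp

text \<open>In practice \<open>c = \<surd>(M\<^sub>i\<^sub>j M\<^sub>j\<^sub>i)\<close> and \<open>d = -M\<^sub>j\<^sub>i / c\<close>; keeping \<open>c\<close> and \<open>d\<close> abstract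
  avoids a separate treatment of \<open>M\<^sub>i\<^sub>j = M\<^sub>j\<^sub>i = 0\<close>, where \<open>c = d = 0\<close>.\<close>

lemma alt_word_act_simple_root:
  assumes ij: "i < n" "j < n" "i \<noteq> j" "M i i = 2" "M j j = 2"
    and cd: "c * d = - M j i" "- M i j * d = c"
  shows "word_act n M (alt_word i j (2 * k)) (simple_root i) =
           pair_vec i j (cheb c (2 * k + 1)) (d * cheb c (2 * k))"
    and "word_act n M (alt_word i j (2 * k + 1)) (simple_root i) =
           pair_vec i j (cheb c (2 * k + 1)) (d * cheb c (2 * k + 2))"
proof (induction k)
  case 0
  show "word_act n M (alt_word i j (2 * 0)) (simple_root i) =
          pair_vec i j (cheb c (2 * 0 + 1)) (d * cheb c (2 * 0))"
    by (simp add: simple_root_eq_pair_vec[of i j])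
  show "word_act n M (alt_word i j (2 * 0 + 1)) (simple_root i) =
          pair_vec i j (cheb c (2 * 0 + 1)) (d * cheb c (2 * 0 + 2))"
    using cd ij
    by (simp add: alt_word_Suc simple_root_eq_pair_vec[of i j] refl_act_pair_vec_snd
        mult.commute[of d c])
next
  case (Suc k)
  have "word_act n M (alt_word i j (2 * Suc k)) (simple_root i) =
          refl_act n M i (word_act n M (alt_word i j (2 * k + 1)) (simple_root i))"
    by (simp add: alt_word_Suc)
  also have "\<dots> = pair_vec i j (cheb c (2 * Suc k + 1)) (d * cheb c (2 * Suc k))"
    by (simp only: Suc(2) refl_act_pair_vec_fst[of i n j M, OF ij(1-4)] cheb_pair_step(1)[OF cd])
      simp
  finally show even: "word_act n M (alt_word i j (2 * Suc k)) (simple_root i) =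
                        pair_vec i j (cheb c (2 * Suc k + 1)) (d * cheb c (2 * Suc k))" .
  have "word_act n M (alt_word i j (2 * Suc k + 1)) (simple_root i) =
          refl_act n M j (word_act n M (alt_word i j (2 * Suc k)) (simple_root i))"
    by (simp add: alt_word_Suc)
  also have "\<dots> = pair_vec i j (cheb c (2 * Suc k + 1)) (d * cheb c (2 * Suc k + 2))"
    by (simp only: even refl_act_pair_vec_snd[of i n j M, OF ij(1-3,5)] cheb_pair_step(2)[OF cd])
  finally show "word_act n M (alt_word i j (2 * Suc k + 1)) (simple_root i) =
                  pair_vec i j (cheb c (2 * Suc k + 1)) (d * cheb c (2 * Suc k + 2))" .
qed

lemma word_act_in_roots:
  assumes "a \<in> roots n M" "ws \<in> words n"
  shows "word_act n M ws a \<in> roots n M"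
proof -
  obtain ws' i where "ws' \<in> words n" "i < n" "a = word_act n M ws' (simple_root i)"
    using assms(1) unfolding roots_def by blast
  then show ?thesis
    unfolding roots_def using assms(2) by (intro CollectI exI[of _ "ws @ ws'"] exI[of _ i]) simp
qed

lemma root_vanishes_outside: "a \<in> roots n M \<Longrightarrow> k \<ge> n \<Longrightarrow> a k = 0"
  unfolding roots_def using word_act_vanishes_outside by (fastforce simp: simple_root_def)

definition pos_root_multiples :: "nat \<Rightarrow> (nat \<Rightarrow> nat \<Rightarrow> real) \<Rightarrow> nat \<Rightarrow> (nat \<Rightarrow> real) set" where
  "pos_root_multiples n M x = {a \<in> pos_roots n M. \<exists>K::real. a = (\<lambda>k. K * simple_root x k)}"

lemma f_node_eq_card: "f_node n M x = card (pos_root_multiples n M x)"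
  by (simp add: f_node_def pos_root_multiples_def)

locale egcm_graph =
  fixes n :: nat and M :: "nat \<Rightarrow> nat \<Rightarrow> real"
  assumes egcm: "egcm n M"
begin

lemma diag: "i < n \<Longrightarrow> M i i = 2"
  using egcm by (simp add: egcm_def)

lemma word_act_rev_inverse: "ws \<in> words n \<Longrightarrow> word_act n M (rev ws) (word_act n M ws v) = v"
  using word_act_rev_cancel diag by blast

lemma offdiag_nonpos: "i < n \<Longrightarrow> j < n \<Longrightarrow> i \<noteq> j \<Longrightarrow> M i j \<le> 0"
  using egcm by (simp add: egcm_def)

lemma offdiag_zero_iff: "i < n \<Longrightarrow> j < n \<Longrightarrow> i \<noteq> j \<Longrightarrow> M i j = 0 \<longleftrightarrow> M j i = 0"
  using egcm by (simp add: egcm_def)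

lemma cox_product_cases:
  assumes "i < n" "j < n" "i \<noteq> j" "M i j * M j i \<noteq> 0"
  shows "4 \<le> M i j * M j i \<or> (\<exists>m\<ge>3. M i j * M j i = 4 * (cos (pi / real m))\<^sup>2)"
  using egcm assms unfolding egcm_def by blast

lemma cox_m_enat:
  assumes "i < n" "j < n" "i \<noteq> j" "cox_m M i j = enat m"
  shows "2 \<le> m" "M i j * M j i = 4 * (cos (pi / real m))\<^sup>2" "M i j * M j i < 4"
proof -
  show lt: "M i j * M j i < 4"
    using assms(3,4) by (auto simp: cox_m_def split: if_splits)
  have "\<exists>k\<ge>2. M i j * M j i = 4 * (cos (pi / real k))\<^sup>2"
  proof (cases "M i j * M j i = 0")
    case True
    then show ?thesis by (intro exI[of _ 2]) simp
  next
    case False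
    then obtain k where "3 \<le> k" "M i j * M j i = 4 * (cos (pi / real k))\<^sup>2"
      using cox_product_cases[OF assms(1-3)] lt by fastforce
    then show ?thesis by (intro exI[of _ k]) simp
  qed
  then obtain k where k: "2 \<le> k" "M i j * M j i = 4 * (cos (pi / real k))\<^sup>2"
    by blast
  have "(THE k. 2 \<le> k \<and> M i j * M j i = 4 * (cos (pi / real k))\<^sup>2) = k"
    by (rule the_equality) (use k cos_sq_pi_div_inj in auto)
  moreover have "m = (THE k. 2 \<le> k \<and> M i j * M j i = 4 * (cos (pi / real k))\<^sup>2)"
    using assms(3,4) lt by (auto simp: cox_m_def split: if_splits)
  ultimately show "2 \<le> m" "M i j * M j i = 4 * (cos (pi / real m))\<^sup>2"
    using k by simp_all
qed

lemma cox_m_eq_two_if_zero: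
  assumes "i < n" "j < n" "i \<noteq> j" "cox_m M i j = enat m" "M i j = 0"
  shows "m = 2"
  using cox_m_enat[OF assms(1-4)] assms(5) cos_sq_pi_div_inj[of m 2] by simp

lemma sqrt_cox_product:
  assumes "i < n" "j < n" "i \<noteq> j" "cox_m M i j = enat m"
  shows "sqrt (M i j * M j i) = 2 * cos (pi / real m)"
proof -
  have "M i j * M j i = (2 * cos (pi / real m))\<^sup>2"
    using cox_m_enat[OF assms] by (simp add: power_mult_distrib)
  then have "sqrt (M i j * M j i) = \<bar>2 * cos (pi / real m)\<bar>"
    by (simp only: real_sqrt_abs)
  then show ?thesis using cos_pi_div_nonneg[OF cox_m_enat(1)[OF assms]] by simp
qed

lemma rank_two_scalars:
  assumes "i < n" "j < n" "i \<noteq> j"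
  obtains c d where "c = sqrt (M i j * M j i)" "c * d = - M j i" "- M i j * d = c" "0 \<le> d"
proof
  let ?c = "sqrt (M i j * M j i)"
  have nonpos: "M i j \<le> 0" "M j i \<le> 0"
    using offdiag_nonpos assms by auto
  then have sq: "?c * ?c = M i j * M j i"
    by (simp add: zero_le_mult_iff)
  show "?c * (- M j i / ?c) = - M j i" "- M i j * (- M j i / ?c) = ?c"
  proof (atomize (full), cases "?c = 0")
    case True
    then have "M i j = 0" "M j i = 0"
      using sq offdiag_zero_iff[OF assms] by auto
    then show "?c * (- M j i / ?c) = - M j i \<and> - M i j * (- M j i / ?c) = ?c" by simp
  next
    case False
    then show "?c * (- M j i / ?c) = - M j i \<and> - M i j * (- M j i / ?c) = ?c"
      using sq by (simp add: field_simps)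
  qed
  have "0 \<le> ?c"
    using nonpos by (simp add: zero_le_mult_iff)
  then show "0 \<le> - M j i / ?c"
    using nonpos by (simp add: divide_nonpos_nonneg)
qed simp

lemma alt_word_braid_fixes_simple_root:
  assumes "i < n" "j < n" "i \<noteq> j" "cox_m M i j = enat m"
  shows "word_act n M (alt_word i j (2 * m)) (simple_root i) = simple_root i"
proof -
  obtain c d where cd: "c = sqrt (M i j * M j i)" "c * d = - M j i" "- M i j * d = c"
    using rank_two_scalars[OF assms(1-3)] .
  have c: "c = 2 * cos (pi / real m)" and m: "2 \<le> m"
    using cd(1) sqrt_cox_product[OF assms] cox_m_enat[OF assms] by auto
  have "word_act n M (alt_word i j (2 * m)) (simple_root i) =
          pair_vec i j (cheb c (2 * m + 1)) (d * cheb c (2 * m))"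
    by (rule alt_word_act_simple_root(1)[OF assms(1-3) diag diag cd(2,3)]) (use assms in auto)
  also have "\<dots> = simple_root i"
    unfolding c cheb_cos_pi_div_2m[OF m] cheb_cos_pi_div_2m_plus_1[OF m]
    by (simp add: simple_root_eq_pair_vec[of i j])
  finally show ?thesis .
qed

lemma alt_word_braid_fixes_simple_root':
  assumes "i < n" "j < n" "i \<noteq> j" "cox_m M i j = enat m"
  shows "word_act n M (alt_word i j (2 * m)) (simple_root j) = simple_root j"
proof -
  have ji: "word_act n M (alt_word j i (2 * m)) (simple_root j) = simple_root j"
    using alt_word_braid_fixes_simple_root[OF assms(2,1) assms(3)[symmetric]] assms(4)
    by (simp add: cox_m_sym)
  have "alt_word j i (2 * m) \<in> words n"
    by (rule words_subset[OF set_alt_word]) (use assms(1,2) in auto)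
  then show ?thesis
    using word_act_rev_inverse[of "alt_word j i (2 * m)" "simple_root j"] ji
    by (simp add: rev_alt_word_even)
qed

lemma rank_two_decomposition:
  assumes ij: "i < n" "j < n" "i \<noteq> j" and lt: "M i j * M j i < 4"
  obtains x y w where "v = (\<lambda>k. w k + pair_vec i j x y k)"
    "(\<Sum>l<n. M i l * w l) = 0" "(\<Sum>l<n. M j l * w l) = 0"
proof -
  have solve: "2 * ((2 * p - a * q) / (4 - a * b)) + a * ((2 * q - b * p) / (4 - a * b)) = p"
    if "a * b < 4" for a b p q :: real
  proof -
    have "2 * ((2 * p - a * q) / (4 - a * b)) + a * ((2 * q - b * p) / (4 - a * b)) =
            (p * (4 - a * b)) / (4 - a * b)"
      by (simp add: add_divide_distrib[symmetric] algebra_simps)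
    then show ?thesis using that by simp
  qed
  define fi where "fi = (\<Sum>l<n. M i l * v l)"
  define fj where "fj = (\<Sum>l<n. M j l * v l)"
  define x where "x = (2 * fi - M i j * fj) / (4 - M i j * M j i)"
  define y where "y = (2 * fj - M j i * fi) / (4 - M i j * M j i)"
  define w where "w = (\<lambda>k. v k - pair_vec i j x y k)"
  have "(\<Sum>l<n. M i l * w l) = fi - (2 * x + M i j * y)"
    unfolding w_def fi_def
    by (simp add: right_diff_distrib sum_subtractf sum_pair_vec[OF ij] diag ij(1))
  also have "\<dots> = 0"
    using solve[OF lt, of fi fj] unfolding x_def y_def by simp
  finally have "(\<Sum>l<n. M i l * w l) = 0" .
  moreover have "(\<Sum>l<n. M j l * w l) = fj - (M j i * x + 2 * y)"
    unfolding w_def fj_def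
    by (simp add: right_diff_distrib sum_subtractf sum_pair_vec[OF ij] diag ij(2))
  moreover have "\<dots> = 0"
    using solve[of "M j i" "M i j" fj fi] lt unfolding x_def y_def by (simp add: mult.commute)
  moreover have "v = (\<lambda>k. w k + pair_vec i j x y k)"
    by (simp add: w_def)
  ultimately show ?thesis using that by simp
qed

text \<open>The braid relation holds on the plane spanned by \<open>\<alpha>\<^sub>i, \<alpha>\<^sub>j\<close> by the Chebyshev computation,
  and trivially on the complement fixed by \<open>s\<^sub>i\<close> and \<open>s\<^sub>j\<close>.\<close>

lemma word_act_braid:
  assumes "i < n" "j < n" "i \<noteq> j" "cox_m M i j = enat m"
  shows "word_act n M (concat (replicate m [i, j])) v = v"
proof -
  obtain x y w where v: "v = (\<lambda>k. w k + pair_vec i j x y k)"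
    and w: "(\<Sum>l<n. M i l * w l) = 0" "(\<Sum>l<n. M j l * w l) = 0"
    using rank_two_decomposition[OF assms(1-3) cox_m_enat(3)[OF assms]] .
  have "word_act n M (alt_word i j (2 * m)) v = v"
    using word_act_fixed[OF set_alt_word w] alt_word_braid_fixes_simple_root[OF assms]
      alt_word_braid_fixes_simple_root'[OF assms]
    by (subst (1 2) v, simp add: word_act_add word_act_pair_vec) (simp add: pair_vec_def)
  then show ?thesis by (simp add: concat_replicate_eq_alt_word)
qed

lemma cox_eq_word_act: "cox_eq n M u v \<Longrightarrow> word_act n M u = word_act n M v"
proof (induction rule: cox_eq.induct)
  case (square i u v)
  then show ?case by (simp add: fun_eq_iff refl_act_involutive diag)
next
  case (braid i j k u v)
  then show ?case by (simp add: fun_eq_iff word_act_braid)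
qed simp_all

section \<open>Positivity of roots\<close>

text \<open>Since \<open>(s\<^sub>i s\<^sub>j)\<^sup>m = 1\<close>, the last \<open>m + 1\<close> letters may be replaced by the reversed first
  \<open>m - 1\<close> letters of the braid word.\<close>

lemma alt_word_shorten:
  assumes "i < n" "j < n" "i \<noteq> j" "cox_m M i j = enat m" "m + 1 \<le> r"
  obtains u' where "set u' \<subseteq> {i, j}" "length u' + 2 = r" "cox_eq n M (alt_word i j r) u'"
proof -
  have m: "2 \<le> m" using cox_m_enat[OF assms(1-4)] by simp
  define P where "P = take (m - 1) (alt_word i j (2 * m))"
  have P: "P \<in> words n" "set P \<subseteq> {i, j}"
    using set_alt_word[of i j "2 * m"] assms(1,2) set_take_subset[of "m - 1" "alt_word i j (2 * m)"]
    by (auto simp: P_def words_def)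
  have "drop (m - 1) (alt_word i j (2 * m)) = alt_word i j (m + 1)"
    using m by (simp add: drop_alt_word)
  then have "alt_word i j (2 * m) = P @ alt_word i j (m + 1)"
    by (metis P_def append_take_drop_id)
  then have "cox_eq n M (P @ alt_word i j (m + 1)) []"
    using cox_eq.braid[OF assms(1-4), of "[]" "[]"] by (simp add: concat_replicate_eq_alt_word)
  then have "cox_eq n M (rev P @ P @ alt_word i j (m + 1)) (rev P)"
    using cox_eq_append_left by fastforce
  moreover have "cox_eq n M (rev P @ P @ alt_word i j (m + 1)) (alt_word i j (m + 1))"
    using cox_eq_append_right[OF cox_eq_rev_cancel[of "rev P" n M]] P(1) by (simp add: words_def)
  ultimately have tail: "cox_eq n M (alt_word i j (m + 1)) (rev P)"
    by (meson cox_eq.sym cox_eq.trans)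
  define u' where "u' = take (r - (m + 1)) (alt_word i j r) @ rev P"
  have "alt_word i j r = take (r - (m + 1)) (alt_word i j r) @ alt_word i j (m + 1)"
    using assms(5) drop_alt_word[of "r - (m + 1)" i j r] append_take_drop_id
    by (metis diff_diff_cancel)
  then have "cox_eq n M (alt_word i j r) u'"
    using cox_eq_append_left[OF tail] by (metis u'_def)
  moreover have "set u' \<subseteq> {i, j}"
    using P(2) set_alt_word[of i j r] set_take_subset[of "r - (m + 1)" "alt_word i j r"]
    by (auto simp: u'_def)
  moreover have "length u' + 2 = r"
    using assms(5) m by (simp add: u'_def P_def)
  ultimately show ?thesis using that by blast
qed

lemma alt_word_act_simple_root_nonneg:
  assumes ij: "i < n" "j < n" "i \<noteq> j"
    and cheb_nonneg: "\<And>k. k \<le> r + 1 \<Longrightarrow> 0 \<le> cheb (sqrt (M i j * M j i)) k"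
  obtains x y
  where "0 \<le> x" "0 \<le> y" "word_act n M (alt_word i j r) (simple_root i) = pair_vec i j x y"
proof -
  obtain c d where c: "c = sqrt (M i j * M j i)" and cd: "c * d = - M j i" "- M i j * d = c"
    and d: "0 \<le> d"
    using rank_two_scalars[OF ij] .
  note act = alt_word_act_simple_root[OF ij diag[OF ij(1)] diag[OF ij(2)] cd]
  consider k where "r = 2 * k" | k where "r = 2 * k + 1"
    by (metis oddE evenE)
  then show ?thesis
  proof cases
    case 1
    show ?thesis
    proof (rule that)
      show "word_act n M (alt_word i j r) (simple_root i) =
              pair_vec i j (cheb c (2 * k + 1)) (d * cheb c (2 * k))"
        using act(1)[of k] 1 by simp
    qed (use cheb_nonneg[of "2 * k"] cheb_nonneg[of "2 * k + 1"] d c 1 in auto)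
  next
    case 2
    show ?thesis
    proof (rule that)
      show "word_act n M (alt_word i j r) (simple_root i) =
              pair_vec i j (cheb c (2 * k + 1)) (d * cheb c (2 * k + 2))"
        using act(2)[of k] 2 by simp
    qed (use cheb_nonneg[of "2 * k + 2"] cheb_nonneg[of "2 * k + 1"] d c 2 in auto)
  qed
qed

lemma dihedral_simple_root_nonneg:
  assumes ij: "i < n" "j < n" "i \<noteq> j" and u: "set u \<subseteq> {i, j}"
    and reduced: "\<And>u'. set u' \<subseteq> {i, j} \<Longrightarrow> cox_eq n M u u' \<Longrightarrow> length u \<le> length u'"
    and ascent: "\<And>u'. set u' \<subseteq> {i, j} \<Longrightarrow> cox_eq n M (u @ [i]) u' \<Longrightarrow> length u < length u'"
  obtains x y where "0 \<le> x" "0 \<le> y" "word_act n M u (simple_root i) = pair_vec i j x y"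
proof -
  define r where "r = length u"
  have u_alt: "u = alt_word i j r"
    unfolding r_def using dihedral_reduced_eq_alt_word[OF ij(1,2) u reduced ascent] .
  have "0 \<le> cheb (sqrt (M i j * M j i)) k" if k: "k \<le> r + 1" for k
  proof (cases "cox_m M i j")
    case (enat m)
    have "r < m"
    proof (rule ccontr)
      assume "\<not> r < m"
      moreover have "cox_m M j i = enat m" using enat by (simp add: cox_m_sym)
      ultimately obtain u' where "set u' \<subseteq> {j, i}" "length u' + 2 = Suc r"
        "cox_eq n M (alt_word j i (Suc r)) u'"
        using alt_word_shorten[OF ij(2,1) ij(3)[symmetric]]
        by (metis Suc_eq_plus1 not_less Suc_le_mono)
      then show False
        using ascent[of u'] u_alt alt_word_Suc_snoc[of j i r] by (auto simp: insert_commute)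
    qed
    then show ?thesis
      using k sqrt_cox_product[OF ij enat] cheb_cos_pi_div_nonneg cox_m_enat(1)[OF ij enat] by simp
  next
    case infinity
    then have "2 \<le> sqrt (M i j * M j i)"
      using cox_m_infinity[OF ij(3)] real_sqrt_le_mono[of 4 "M i j * M j i"] by simp
    then show ?thesis by (rule cheb_nonneg_if_two_le)
  qed
  then show ?thesis
    using alt_word_act_simple_root_nonneg[OF ij] that u_alt by metis
qed

text \<open>Humphreys, \<^emph>\<open>Reflection groups and Coxeter groups\<close>, Theorem 5.4: write \<open>w\<close> as \<open>v u\<close> with
  \<open>u\<close> a word in \<open>s\<^sub>i, s\<^sub>j\<close> (\<open>s\<^sub>j\<close> a right descent of \<open>w\<close>) and \<open>l(v)\<close> minimal; then \<open>v\<close> has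
  ascents at \<open>i\<close> and \<open>j\<close>, and the rank two case applies to \<open>u\<close>.\<close>

theorem simple_root_image_nonneg:
  assumes "ws \<in> words n" "i < n" "cox_length n M ws < cox_length n M (ws @ [i])"
  shows "\<forall>k<n. 0 \<le> word_act n M ws (simple_root i) k"
  using assms
proof (induction "cox_length n M ws" arbitrary: ws i rule: less_induct)
  case less
  show ?case
  proof (cases "cox_length n M ws = 0")
    case True
    then obtain vs where "length vs = 0" "cox_eq n M ws vs"
      using cox_length_witness[OF less.prems(1)] by metis
    then show ?thesis using cox_eq_word_act by (simp add: simple_root_def)
  next
    case False
    obtain w' j where w': "w' \<in> words n" "j < n" "cox_eq n M ws (w' @ [j])"
      and len_w': "cox_length n M w' + 1 = cox_length n M ws"
      using cox_length_snoc_witness[OF less.prems(1) False] .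
    have "j \<noteq> i" using right_descent_ne_ascent[OF less.prems(2) w'(3) len_w' less.prems(3)] .
    obtain v u where v: "v \<in> words n" and u: "set u \<subseteq> {i, j}" and ws_vu: "cox_eq n M ws (v @ u)"
      and len_vu: "cox_length n M v + length u = cox_length n M ws"
      and len_v: "cox_length n M v \<le> cox_length n M w'"
      and ascent_v: "cox_length n M v < cox_length n M (v @ [i])"
        "cox_length n M v < cox_length n M (v @ [j])"
      using parabolic_split[OF less.prems(2) w'(2,1), of "[j]" M ws] w'(3) len_w' by auto
    have IH: "\<forall>k<n. 0 \<le> word_act n M v (simple_root t) k" if "t \<in> {i, j}" for t
      using less.hyps[of v t] v ascent_v that len_v len_w' less.prems(2) w'(2) by auto
    have words_ij: "u' \<in> words n" if "set u' \<subseteq> {i, j}" for u'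
      using that less.prems(2) w'(2) by (auto intro: words_subset)
    obtain x y where xy: "0 \<le> x" "0 \<le> y" "word_act n M u (simple_root i) = pair_vec i j x y"
    proof (rule dihedral_simple_root_nonneg[OF less.prems(2) w'(2) \<open>j \<noteq> i\<close>[symmetric] u])
      show "length u \<le> length u'" if "set u' \<subseteq> {i, j}" "cox_eq n M u u'" for u'
        using cox_length_tail_replace[OF v words_ij[OF that(1)] ws_vu, of "[]"] that(2) len_vu
        by simp
      show "length u < length u'" if "set u' \<subseteq> {i, j}" "cox_eq n M (u @ [i]) u'" for u'
        using cox_length_tail_replace[OF v words_ij[OF that(1)] ws_vu that(2)] less.prems(3) len_vu
        by simp
    qed
    have "word_act n M ws (simple_root i) =
            (\<lambda>k. x * word_act n M v (simple_root i) k + y * word_act n M v (simple_root j) k)"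
      using cox_eq_word_act[OF ws_vu] xy(3) by (simp add: word_act_pair_vec)
    then show ?thesis using IH xy(1,2) by simp
  qed
qed

section \<open>Inversion sets\<close>

lemma root_nonzero:
  assumes "a \<in> roots n M"
  obtains k where "k < n" "a k \<noteq> 0"
proof (rule ccontr)
  assume "\<not> thesis"
  then have "a = (\<lambda>k. 0)"
    using that root_vanishes_outside[OF assms] by (metis not_le)
  moreover obtain ws i where ws: "ws \<in> words n" "i < n" "a = word_act n M ws (simple_root i)"
    using assms unfolding roots_def by blast
  ultimately have "simple_root i = (\<lambda>k. 0)"
    using word_act_rev_inverse[OF ws(1)] word_act_zero by metis
  then show False by (metis simple_root_def zero_neq_one)
qed

lemma pos_roots_neg_roots_disjoint: "pos_roots n M \<inter> neg_roots n M = {}"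
proof (intro equals0I)
  fix a assume a: "a \<in> pos_roots n M \<inter> neg_roots n M"
  then obtain k where "k < n" "a k \<noteq> 0"
    using root_nonzero by (auto simp: pos_roots_def)
  then show False using a by (force simp: pos_roots_def neg_roots_def)
qed

lemma roots_pos_or_neg:
  assumes "a \<in> roots n M"
  shows "a \<in> pos_roots n M \<or> a \<in> neg_roots n M"
proof -
  obtain ws i where ws: "ws \<in> words n" "i < n" "a = word_act n M ws (simple_root i)"
    using assms unfolding roots_def by blast
  show ?thesis
  proof (cases "cox_length n M ws < cox_length n M (ws @ [i])")
    case True
    then show ?thesis
      using simple_root_image_nonneg[OF ws(1,2)] ws(3) assms by (simp add: pos_roots_def)
  next
    case False
    then have "cox_length n M (ws @ [i]) < cox_length n M ((ws @ [i]) @ [i])"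
      using cox_length_snoc[OF ws(1,2), of M]
        cox_length_cong[OF cox_eq_snoc_square[OF ws(2), of M ws]]
      by auto
    then have "\<forall>k<n. 0 \<le> word_act n M (ws @ [i]) (simple_root i) k"
      using simple_root_image_nonneg[of "ws @ [i]" i] ws by simp
    moreover have "word_act n M (ws @ [i]) (simple_root i) = (\<lambda>k. - a k)"
      using ws(3) refl_act_simple_root_self[of i n M, OF ws(2) diag[OF ws(2)]]
        word_act_scale[of n M ws "-1"]
      by simp
    ultimately show ?thesis using assms by (simp add: neg_roots_def)
  qed
qed

lemma pos_root_multiples_pos:
  assumes "a \<in> pos_root_multiples n M i" "i < n"
  obtains K where "K > 0" "a = (\<lambda>k. K * simple_root i k)"
proof -
  obtain K where K: "a = (\<lambda>k. K * simple_root i k)" and a: "a \<in> pos_roots n M"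
    using assms(1) unfolding pos_root_multiples_def by blast
  have "0 \<le> K" using a assms(2) K by (auto simp: pos_roots_def simple_root_def)
  moreover have "K \<noteq> 0" using root_nonzero[of a] a K by (auto simp: pos_roots_def)
  ultimately show ?thesis using that[of K] K by simp
qed

text \<open>A positive root that is not a multiple of \<open>\<alpha>\<^sub>i\<close> has a positive coordinate other than the
  \<open>i\<close>-th one, and \<open>s\<^sub>i\<close> does not change it.\<close>

lemma refl_act_pos_root:
  assumes "a \<in> pos_roots n M" "a \<notin> pos_root_multiples n M i" "i < n"
  shows "refl_act n M i a \<in> pos_roots n M" "refl_act n M i a \<notin> pos_root_multiples n M i"
proof -
  have root: "a \<in> roots n M" using assms(1) by (simp add: pos_roots_def)
  have "\<exists>k<n. k \<noteq> i \<and> a k \<noteq> 0"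
  proof (rule ccontr)
    assume none: "\<not> (\<exists>k<n. k \<noteq> i \<and> a k \<noteq> 0)"
    have "a k = a i * simple_root i k" for k
      using none root_vanishes_outside[OF root, of k]
      by (cases "k < n") (auto simp: simple_root_def)
    then show False using assms(1,2) unfolding pos_root_multiples_def by blast
  qed
  then obtain k where k: "k < n" "k \<noteq> i" "a k \<noteq> 0" by blast
  have pos: "refl_act n M i a k > 0"
    using k assms(1) by (auto simp: pos_roots_def refl_act_def order_le_less)
  have "refl_act n M i a \<in> roots n M" using word_act_in_roots[OF root, of "[i]"] assms(3) by simp
  then show "refl_act n M i a \<in> pos_roots n M"
    using roots_pos_or_neg pos k(1) by (force simp: neg_roots_def)
  show "refl_act n M i a \<notin> pos_root_multiples n M i"
    using pos k(2) by (auto simp: pos_root_multiples_def simple_root_def)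
qed

lemma pos_root_multiples_subset_inv_set:
  assumes vs: "vs \<in> words n" and i: "i < n"
    and ascent: "cox_length n M vs < cox_length n M (vs @ [i])"
  shows "pos_root_multiples n M i \<subseteq> inv_set n M (vs @ [i])"
proof
  fix a assume a: "a \<in> pos_root_multiples n M i"
  then obtain K where K: "K > 0" "a = (\<lambda>k. K * simple_root i k)"
    using pos_root_multiples_pos i by blast
  have "word_act n M (vs @ [i]) a = (\<lambda>k. - K * word_act n M vs (simple_root i) k)"
    using K(2) refl_act_simple_root_self[of i n M, OF i diag[OF i]]
      word_act_scale[of n M "[i]" K "simple_root i"] word_act_scale[of n M vs "- K" "simple_root i"]
    by simp
  moreover have "word_act n M (vs @ [i]) a \<in> roots n M"
    using a vs i by (intro word_act_in_roots) (simp_all add: pos_root_multiples_def pos_roots_def)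
  ultimately have "word_act n M (vs @ [i]) a \<in> neg_roots n M"
    using simple_root_image_nonneg[OF vs i ascent] K(1) by (auto simp: neg_roots_def)
  then show "a \<in> inv_set n M (vs @ [i])"
    using a by (simp add: inv_set_def pos_root_multiples_def)
qed

lemma inv_set_disjoint_pos_root_multiples:
  assumes vs: "vs \<in> words n" and i: "i < n"
    and ascent: "cox_length n M vs < cox_length n M (vs @ [i])"
  shows "inv_set n M vs \<inter> pos_root_multiples n M i = {}"
proof (intro equals0I)
  fix b assume b: "b \<in> inv_set n M vs \<inter> pos_root_multiples n M i"
  then obtain K where K: "K > 0" "b = (\<lambda>k. K * simple_root i k)"
    using pos_root_multiples_pos i by blast
  then have "word_act n M vs b = (\<lambda>k. K * word_act n M vs (simple_root i) k)"
    by (simp add: word_act_scale)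
  then have "word_act n M vs b \<in> pos_roots n M"
    using b simple_root_image_nonneg[OF vs i ascent] K(1)
    by (auto simp: inv_set_def neg_roots_def pos_roots_def)
  then show False using b pos_roots_neg_roots_disjoint by (auto simp: inv_set_def)
qed

lemma inv_set_snoc:
  assumes vs: "vs \<in> words n" and i: "i < n"
    and ascent: "cox_length n M vs < cox_length n M (vs @ [i])"
  shows "inv_set n M (vs @ [i]) = pos_root_multiples n M i \<union> refl_act n M i ` inv_set n M vs"
    and "pos_root_multiples n M i \<inter> refl_act n M i ` inv_set n M vs = {}"
proof -
  note disjoint = inv_set_disjoint_pos_root_multiples[OF assms]
  have involutive: "refl_act n M i (refl_act n M i a) = a" for a
    using refl_act_involutive[of i n M, OF i diag[OF i]] .
  show "pos_root_multiples n M i \<inter> refl_act n M i ` inv_set n M vs = {}"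
    using refl_act_pos_root(2) disjoint i by (auto simp: inv_set_def)
  have "a \<in> refl_act n M i ` inv_set n M vs"
    if "a \<in> inv_set n M (vs @ [i])" "a \<notin> pos_root_multiples n M i" for a
  proof -
    have "refl_act n M i a \<in> inv_set n M vs"
      using that refl_act_pos_root(1)[OF _ that(2) i] by (simp add: inv_set_def)
    then show ?thesis using involutive[of a] by (metis image_eqI)
  qed
  moreover have "refl_act n M i b \<in> inv_set n M (vs @ [i])" if "b \<in> inv_set n M vs" for b
    using that disjoint refl_act_pos_root(1)[of b i] i involutive by (auto simp: inv_set_def)
  ultimately show
    "inv_set n M (vs @ [i]) = pos_root_multiples n M i \<union> refl_act n M i ` inv_set n M vs"
    using pos_root_multiples_subset_inv_set[OF assms] by blast
qed

lemma inv_set_reduced: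
  assumes "vs \<in> words n" "cox_length n M vs = length vs"
  shows "finite (inv_set n M vs) \<longleftrightarrow> (\<forall>x\<in>set vs. finite (pos_root_multiples n M x))"
    and "finite (inv_set n M vs) \<Longrightarrow> card (inv_set n M vs) = (\<Sum>x\<leftarrow>vs. f_node n M x)"
proof -
  have "(finite (inv_set n M vs) \<longleftrightarrow> (\<forall>x\<in>set vs. finite (pos_root_multiples n M x))) \<and>
        (finite (inv_set n M vs) \<longrightarrow> card (inv_set n M vs) = (\<Sum>x\<leftarrow>vs. f_node n M x))"
    using assms
  proof (induction vs rule: rev_induct)
    case Nil
    have "inv_set n M [] = {}"
      using pos_roots_neg_roots_disjoint by (auto simp: inv_set_def)
    then show ?case by simp
  next
    case (snoc i vs)
    have vs: "vs \<in> words n" "i < n" using snoc.prems by auto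
    have reduced: "cox_length n M vs = length vs"
      using cox_length_le_length[OF vs(1), of M] cox_length_append_le[of vs n "[i]" M] vs
        snoc.prems(2)
      by simp
    then have ascent: "cox_length n M vs < cox_length n M (vs @ [i])"
      using snoc.prems(2) by simp
    note IH = snoc.IH[OF vs(1) reduced]
    note split = inv_set_snoc[OF vs ascent]
    have "inj_on (refl_act n M i) (inv_set n M vs)"
      by (rule inj_on_inverseI[where g = "refl_act n M i"])
        (rule refl_act_involutive[of i n M, OF vs(2) diag[OF vs(2)]])
    then have "card (refl_act n M i ` inv_set n M vs) = card (inv_set n M vs)"
      and "finite (refl_act n M i ` inv_set n M vs) \<longleftrightarrow> finite (inv_set n M vs)"
      by (simp_all add: card_image finite_image_iff)
    then show ?case
      using IH split by (auto simp: card_Un_disjoint f_node_eq_card)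
  qed
  then show "finite (inv_set n M vs) \<longleftrightarrow> (\<forall>x\<in>set vs. finite (pos_root_multiples n M x))"
    and "finite (inv_set n M vs) \<Longrightarrow> card (inv_set n M vs) = (\<Sum>x\<leftarrow>vs. f_node n M x)"
    by blast+
qed

section \<open>OA-connected components\<close>

lemma pos_root_multiples_transfer:
  assumes u: "u \<in> words n" "K > 0" "word_act n M u (simple_root i) = (\<lambda>k. K * simple_root j k)"
    and ij: "i < n" "j < n"
  shows "word_act n M u ` pos_root_multiples n M i \<subseteq> pos_root_multiples n M j"
proof
  fix b assume "b \<in> word_act n M u ` pos_root_multiples n M i"
  then obtain a where a: "a \<in> pos_root_multiples n M i" and b: "b = word_act n M u a" by blast
  obtain t where t: "t > 0" "a = (\<lambda>k. t * simple_root i k)"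
    using pos_root_multiples_pos[OF a ij(1)] .
  have b_eq: "b = (\<lambda>k. (t * K) * simple_root j k)"
    using b t(2) u(3) word_act_scale[of n M u t "simple_root i"] by (simp add: mult.assoc)
  have "b \<in> roots n M"
    using b a u(1) word_act_in_roots by (auto simp: pos_root_multiples_def pos_roots_def)
  then show "b \<in> pos_root_multiples n M j"
    using b_eq t(1) u(2) by (auto simp: pos_root_multiples_def pos_roots_def simple_root_def)
qed

lemma card_pos_root_multiples_eq:
  assumes u: "u \<in> words n" "K > 0" "word_act n M u (simple_root i) = (\<lambda>k. K * simple_root j k)"
    and ij: "i < n" "j < n"
  shows "card (pos_root_multiples n M i) = card (pos_root_multiples n M j)"
proof -
  have rev_u: "rev u \<in> words n" using u(1) by (simp add: words_def)
  have "simple_root i = word_act n M (rev u) (\<lambda>k. K * simple_root j k)"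
    using word_act_rev_inverse[OF u(1)] u(3) by metis
  then have "word_act n M (rev u) (simple_root j) = (\<lambda>k. inverse K * simple_root i k)"
    using u(2) by (simp add: word_act_scale fun_eq_iff mult.assoc[symmetric])
  then have rev_image: "word_act n M (rev u) ` pos_root_multiples n M j \<subseteq> pos_root_multiples n M i"
    using u(2) ij by (intro pos_root_multiples_transfer[OF rev_u]) simp_all
  have "bij_betw (word_act n M u) (pos_root_multiples n M i) (pos_root_multiples n M j)"
    using word_act_rev_inverse[OF u(1)] word_act_rev_inverse[OF rev_u]
      pos_root_multiples_transfer[OF u ij] rev_image
    by (intro bij_betw_byWitness[where f' = "word_act n M (rev u)"]) auto
  then show ?thesis by (rule bij_betw_same_card)
qed

text \<open>Along an odd edge the alternating word of length \<open>m\<^sub>i\<^sub>j - 1\<close> maps \<open>\<alpha>\<^sub>i\<close> to a positive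
  multiple of \<open>\<alpha>\<^sub>j\<close>.\<close>

lemma odd_adj_transfer:
  assumes "odd_adj n M i j"
  obtains u K
  where "u \<in> words n" "K > 0" "word_act n M u (simple_root i) = (\<lambda>k. K * simple_root j k)"
proof -
  obtain m where ij: "i < n" "j < n" "i \<noteq> j" and m: "cox_m M i j = enat m" "odd m"
    using assms unfolding odd_adj_def by blast
  obtain h where h: "m = 2 * h + 1" using m(2) oddE by blast
  have m2: "2 \<le> m" using cox_m_enat[OF ij m(1)] by simp
  obtain c d where c: "c = sqrt (M i j * M j i)" and cd: "c * d = - M j i" "- M i j * d = c"
    and d: "0 \<le> d"
    using rank_two_scalars[OF ij] .
  have "M i j \<noteq> 0" using cox_m_eq_two_if_zero[OF ij m(1)] m(2) by auto
  then have "M j i \<noteq> 0" using offdiag_zero_iff[OF ij] by simp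
  then have "d \<noteq> 0" using cd(1) by auto
  then have d_pos: "0 < d" using d by simp
  have c_cos: "c = 2 * cos (pi / real m)" using c sqrt_cox_product[OF ij m(1)] by simp
  have "word_act n M (alt_word i j (2 * h)) (simple_root i) =
          pair_vec i j (cheb c (2 * h + 1)) (d * cheb c (2 * h))"
    using alt_word_act_simple_root(1)[OF ij diag[OF ij(1)] diag[OF ij(2)] cd] .
  also have "\<dots> = (\<lambda>k. d * simple_root j k)"
    using cheb_cos_pi_div_m[OF m2] cheb_cos_pi_div_m_minus_1[OF m2]
    by (simp add: c_cos h pair_vec_def)
  finally show ?thesis
    using that[of "alt_word i j (2 * h)" d] d_pos set_alt_word[of i j "2 * h"] ij(1,2)
    by (auto intro: words_subset)
qed

lemma f_node_oa_path: "oa_path n M p \<Longrightarrow> f_node n M (hd p) = f_node n M (last p)"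
proof (induction p)
  case (Cons a p)
  show ?case
  proof (cases "p = []")
    case False
    then have "Suc 0 < length (a # p)" by simp
    then have "odd_adj n M ((a # p) ! 0) ((a # p) ! Suc 0)"
      using Cons.prems unfolding oa_path_def by blast
    then have "odd_adj n M a (hd p)"
      using False by (simp add: hd_conv_nth)
    moreover have "oa_path n M p"
      using Cons.prems False unfolding oa_path_def by auto
    ultimately show ?thesis
      using Cons.IH False odd_adj_transfer card_pos_root_multiples_eq
      by (simp add: f_node_eq_card odd_adj_def) metis
  qed simp
qed (simp add: oa_path_def)

lemma f_node_in_f_comp:
  assumes "x < n"
  shows "f_node n M x \<in> f_comp n M ` oa_components n M"
proof -
  define C where "C = {y. y < n \<and> oa_joined n M x y}"
  have "C \<in> oa_components n M"
    using assms unfolding C_def oa_components_def by blast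
  moreover have "x \<in> C"
    using assms unfolding C_def oa_joined_def by (auto simp: oa_path_def intro!: exI[of _ "[x]"])
  then have "oa_joined n M x (SOME y. y \<in> C)"
    using someI[of "\<lambda>y. y \<in> C"] unfolding C_def by blast
  then have "f_node n M x = f_comp n M C"
    unfolding oa_joined_def f_comp_def using f_node_oa_path by metis
  ultimately show ?thesis by blast
qed

end

lemma finite_oa_components: "finite (oa_components n M)"
proof -
  have "oa_components n M = (\<lambda>x. {y. y < n \<and> oa_joined n M x y}) ` {..<n}"
    unfolding oa_components_def by auto
  then show ?thesis by simp
qed

lemma sum_list_bounds:
  fixes f :: "'a \<Rightarrow> 'b::linordered_semidom"
  assumes "\<And>x. x \<in> set xs \<Longrightarrow> a \<le> f x \<and> f x \<le> b"
  shows "of_nat (length xs) * a \<le> (\<Sum>x\<leftarrow>xs. f x) \<and> (\<Sum>x\<leftarrow>xs. f x) \<le> of_nat (length xs) * b"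
  using sum_list_mono[of xs "\<lambda>_. a" f] sum_list_mono[of xs f "\<lambda>_. b"] assms
  by (simp add: map_replicate_const sum_list_replicate)

theorem proposition4p9:
  fixes n :: nat and M :: "nat \<Rightarrow> nat \<Rightarrow> real"
  assumes "egcm n M" and "unital_oa_cyclic n M"
    and "ws \<in> words n"
  shows "Min (f_comp n M ` oa_components n M) * cox_length n M ws \<le> card (inv_set n M ws)
       \<and> card (inv_set n M ws) \<le> Max (f_comp n M ` oa_components n M) * cox_length n M ws"
proof -
  interpret egcm_graph n M by (rule egcm_graph.intro) (fact assms(1))
  let ?F = "f_comp n M ` oa_components n M"
  obtain vs where vs: "vs \<in> words n" "length vs = cox_length n M ws" "cox_eq n M ws vs"
    using cox_length_witness[OF assms(3)] .
  have reduced: "cox_length n M vs = length vs"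
    using vs cox_length_cong by metis
  have inv: "inv_set n M ws = inv_set n M vs"
    unfolding inv_set_def using cox_eq_word_act[OF vs(3)] by simp
  have bounds: "Min ?F \<le> f_node n M x \<and> f_node n M x \<le> Max ?F" if "x \<in> set vs" for x
    using f_node_in_f_comp[of x] finite_oa_components[of n M] that vs(1) by (auto simp: words_def)
  show ?thesis
  proof (cases "finite (inv_set n M vs)")
    case True
    then show ?thesis
      using inv_set_reduced(2)[OF vs(1) reduced] inv vs(2)
        sum_list_bounds[of vs "Min ?F" "f_node n M" "Max ?F", OF bounds]
      by (simp add: mult.commute)
  next
    case False
    then obtain x where "x \<in> set vs" "infinite (pos_root_multiples n M x)"
      using inv_set_reduced(1)[OF vs(1) reduced] by blast
    then show ?thesis
      using bounds[of x] False inv by (simp add: f_node_eq_card)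
  qed
qed

end
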